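(* Let $G$ be a connected weighted multigraph on the vertex set $V$, $|V|\ge2$, with positive edge weights, and let $\tilde G$ be any balance-graph of $G$. Then for all $i,j\in V$ the resistance distance between $i$ and $j$ in $G$ equals the long walk distance $d^{LW}(i,j)$ computed in $\tilde G$.
   Context: Loops and multiple edges are allowed. The weighted adjacency matrix $A(H)=(a_{ij})$ of a graph $H$ has $a_{ij}$ equal to the sum of weights of the edges joining $i$ and $j$; its Laplacian is $L(H)=\operatorname{diag}(A(H)\mathbf 1)-A(H)$. The resistance distance in $G$ is $d^r(i,j)=(e_i-e_j)^{\mathsf T}L(G)^{+}(e_i-e_j)$, where $L^+$ is the Moore–Penrose inverse and $e_i$ the standard basis vectors (equivalently, the effective resistance when each edge is a resistor of conductance equal to its weight). A balance-graph of $G$ is a graph $\tilde G$ with the same vertices, containing the edges of $G$ with the same weights, whose additional edges are all loops with positive weights, and whose weighted adjacency matrix has constant row sums. For a connected graph $H$ on $n$ vertices with adjacency matrix $B$ and spectral radius $\rho$, the long walk distance is $d^{LW}(i,j)=\lim_{\alpha\to\infty}\theta\bigl(\tfrac12(\ln r_{ii}+\ln r_{jj})-\ln r_{ij}\bigr)$, where $(r_{ij})=(I-tB)^{-1}$, $t=(\rho+\alpha^{-1})^{-1}$, and $\theta=\ln(e+\alpha^{2/n})\frac{\alpha-1}{\ln\alpha}$. *)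

theory Defs
  imports "HOL-Analysis.Analysis"
begin

text \<open>A weighted multigraph on the vertex type 'n (vertex set V = UNIV, finite):
  a finite set of edges E, an endpoint map (ends e = {i,j}; a loop at i has ends e = {i}),
  and an edge weight function w.\<close>

definition wmultigraph :: "'e set \<Rightarrow> ('e \<Rightarrow> 'n set) \<Rightarrow> ('e \<Rightarrow> real) \<Rightarrow> bool" where
  "wmultigraph E ends w \<longleftrightarrow> finite E \<and>
     (\<forall>e\<in>E. ends e \<noteq> {} \<and> card (ends e) \<le> 2) \<and> (\<forall>e\<in>E. w e > 0)"

definition wadj :: "'e set \<Rightarrow> ('e \<Rightarrow> 'n::finite set) \<Rightarrow> ('e \<Rightarrow> real) \<Rightarrow> real^'n^'n" where
  "wadj E ends w = (\<chi> i j. \<Sum>e\<in>{e\<in>E. ends e = {i, j}}. w e)"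

definition laplacian :: "real^'n^'n \<Rightarrow> real^'n^'n" where
  "laplacian A = (\<chi> i j. (if i = j then (\<Sum>k\<in>UNIV. A $ i $ k) else 0) - A $ i $ j)"

definition wconnected :: "'e set \<Rightarrow> ('e \<Rightarrow> 'n set) \<Rightarrow> bool" where
  "wconnected E ends \<longleftrightarrow>
     (\<forall>i j. (\<lambda>x y. \<exists>e\<in>E. ends e = {x, y})\<^sup>*\<^sup>* i j)"

definition mp_inverse :: "real^'n^'n \<Rightarrow> real^'n^'n" where
  "mp_inverse A = (THE X. A ** X ** A = A \<and> X ** A ** X = X \<and>
       transpose (A ** X) = A ** X \<and> transpose (X ** A) = X ** A)"

definition resistance_distance :: "real^'n^'n \<Rightarrow> 'n \<Rightarrow> 'n \<Rightarrow> real" where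
  "resistance_distance A i j =
     (axis i 1 - axis j 1) \<bullet> (mp_inverse (laplacian A) *v (axis i 1 - axis j 1))"

definition balance_graph ::
  "'e set \<Rightarrow> ('e \<Rightarrow> 'n::finite set) \<Rightarrow> ('e \<Rightarrow> real) \<Rightarrow>
   'e set \<Rightarrow> ('e \<Rightarrow> 'n set) \<Rightarrow> ('e \<Rightarrow> real) \<Rightarrow> bool" where
  "balance_graph E ends w E' ends' w' \<longleftrightarrow>
     wmultigraph E' ends' w' \<and> E \<subseteq> E' \<and>
     (\<forall>e\<in>E. ends' e = ends e \<and> w' e = w e) \<and>
     (\<forall>e\<in>E' - E. (\<exists>i. ends' e = {i}) \<and> w' e > 0) \<and>
     (\<exists>c. \<forall>i. (\<Sum>j\<in>UNIV. wadj E' ends' w' $ i $ j) = c)"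

definition spectral_radius :: "real^'n^'n \<Rightarrow> real" where
  "spectral_radius B = Max {cmod z | z. det (mat z - (\<chi> i j. complex_of_real (B $ i $ j))) = 0}"

definition lw_theta :: "nat \<Rightarrow> real \<Rightarrow> real" where
  "lw_theta n \<alpha> = ln (exp 1 + \<alpha> powr (2 / real n)) * (\<alpha> - 1) / ln \<alpha>"

definition lw_R :: "real^'n^'n \<Rightarrow> real \<Rightarrow> real^'n^'n" where
  "lw_R B \<alpha> = matrix_inv (mat 1 - (1 / (spectral_radius B + 1 / \<alpha>)) *\<^sub>R B)"

text \<open>Long walk distance as a limit (the statement "d^LW(i,j) = d" means the limit exists and is d).\<close>
definition has_long_walk_distance :: "real^'n^'n \<Rightarrow> 'n \<Rightarrow> 'n \<Rightarrow> real \<Rightarrow> bool" where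
  "has_long_walk_distance B i j d \<longleftrightarrow>
     ((\<lambda>\<alpha>. lw_theta CARD('n) \<alpha> *
        ((ln (lw_R B \<alpha> $ i $ i) + ln (lw_R B \<alpha> $ j $ j)) / 2 - ln (lw_R B \<alpha> $ i $ j)))
      \<longlongrightarrow> d) at_top"

end

theory Submission
  imports Defs "HOL-Computational_Algebra.Polynomial"
begin

text \<open>Let \<open>B\<close> be the adjacency matrix of the balance-graph. It is symmetric, nonnegative, has
  constant row sums \<open>c\<close> and agrees with the adjacency matrix of \<open>G\<close> off the diagonal, so both
  graphs have the Laplacian \<open>L = c I - B\<close>; moreover \<open>\<rho>(B) = c\<close>. With \<open>\<epsilon> = 1/\<alpha>\<close> and
  \<open>t = 1/(c + \<epsilon>)\<close> we get \<open>I - t B = t (L + \<epsilon> I)\<close>, and with the projection \<open>P = J/n\<close> onto the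
  constants, \<open>(L + \<epsilon> I)\<^sup>-\<^sup>1 = P/\<epsilon> + (L + P + \<epsilon> I)\<^sup>-\<^sup>1 - P/(1 + \<epsilon>)\<close>, where
  \<open>(L + P)\<^sup>-\<^sup>1 - P = L\<^sup>+\<close>. Hence \<open>r\<^sub>i\<^sub>j = (c + \<epsilon>) (\<alpha>/n) (1 + n \<delta>\<^sub>i\<^sub>j(\<alpha>)/\<alpha>)\<close> with
  \<open>\<delta>\<^sub>i\<^sub>j(\<alpha>) \<longrightarrow> L\<^sup>+\<^sub>i\<^sub>j\<close>. The common factors cancel in \<open>(ln r\<^sub>i\<^sub>i + ln r\<^sub>j\<^sub>j)/2 - ln r\<^sub>i\<^sub>j\<close>,
  and \<open>\<alpha> ln (1 + n \<delta>\<^sub>i\<^sub>j(\<alpha>)/\<alpha>) \<longrightarrow> n L\<^sup>+\<^sub>i\<^sub>j\<close>; as \<open>\<theta>/\<alpha> \<longrightarrow> 2/n\<close>, the long walk distance is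
  \<open>L\<^sup>+\<^sub>i\<^sub>i + L\<^sup>+\<^sub>j\<^sub>j - 2 L\<^sup>+\<^sub>i\<^sub>j\<close>, the resistance distance in \<open>G\<close>.\<close>

lemma matrix_inv_mult_eq_mat_1:
  assumes "invertible A"
  shows "A ** matrix_inv A = mat 1" "matrix_inv A ** A = mat 1"
  using someI_ex[OF assms[unfolded invertible_def]] by (simp_all add: matrix_inv_def)

lemma matrix_inv_eqI:
  fixes A :: "'a::field^'n^'n"
  assumes "A ** X = mat 1"
  shows "matrix_inv A = X"
proof -
  have "invertible A"
    using assms invertible_right_inverse by blast
  then have "matrix_inv A = matrix_inv A ** (A ** X)"
    using assms by simp
  also have "\<dots> = X"
    using matrix_inv_mult_eq_mat_1(2)[OF \<open>invertible A\<close>] by (simp add: matrix_mul_assoc)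
  finally show ?thesis .
qed

lemma moore_penrose_unique:
  fixes A X Z :: "real^'n^'n"
  assumes x1: "A ** X ** A = A" and x2: "X ** A ** X = X"
    and x3: "transpose (A ** X) = A ** X" and x4: "transpose (X ** A) = X ** A"
    and z1: "A ** Z ** A = A" and z2: "Z ** A ** Z = Z"
    and z3: "transpose (A ** Z) = A ** Z" and z4: "transpose (Z ** A) = Z ** A"
  shows "X = Z"
proof -
  have tA_AZ: "transpose A = transpose A ** (A ** Z)"
  proof -
    have "transpose A = transpose ((A ** Z) ** A)" using z1 by simp
    also have "\<dots> = transpose A ** (A ** Z)" by (subst matrix_transpose_mul) (simp only: z3)
    finally show ?thesis .
  qed
  have tA_XA: "transpose A = (X ** A) ** transpose A"
  proof -
    have "transpose A = transpose (A ** (X ** A))" using x1 by (simp add: matrix_mul_assoc)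
    also have "\<dots> = (X ** A) ** transpose A" by (subst matrix_transpose_mul) (simp only: x4)
    finally show ?thesis .
  qed
  have "X = X ** transpose (A ** X)" using x2 x3 by (simp add: matrix_mul_assoc)
  also have "\<dots> = X ** (transpose X ** (transpose A ** (A ** Z)))"
    using tA_AZ by (simp add: matrix_transpose_mul)
  also have "\<dots> = (X ** A ** X) ** A ** Z"
    using x3 by (simp add: matrix_transpose_mul[symmetric] matrix_mul_assoc)
  finally have X_eq: "X = X ** A ** Z" using x2 by simp
  have "Z = transpose (Z ** A) ** Z" using z2 z4 by simp
  also have "\<dots> = (((X ** A) ** transpose A) ** transpose Z) ** Z"
    using tA_XA by (simp add: matrix_transpose_mul)
  also have "\<dots> = (X ** A) ** transpose (Z ** A) ** Z"
    by (simp add: matrix_transpose_mul matrix_mul_assoc)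
  also have "\<dots> = X ** A ** (Z ** A ** Z)"
    using z4 by (simp add: matrix_mul_assoc)
  finally show ?thesis using X_eq z2 by simp
qed

lemma mp_inverse_eqI:
  fixes A X :: "real^'n^'n"
  assumes "A ** X ** A = A" "X ** A ** X = X"
    and "transpose (A ** X) = A ** X" "transpose (X ** A) = X ** A"
  shows "mp_inverse A = X"
  unfolding mp_inverse_def
  by (rule the_equality) (use assms moore_penrose_unique[of A _ X] in blast)+

lemma mat_mult_vector: "mat e *v x = e *s (x::'a::semiring_1^'n)"
  by (simp add: vec_eq_iff matrix_vector_mult_def mat_def if_distrib[of "\<lambda>a. a * _"] cong: if_cong)

lemma matrix_vector_mult_axis_nth: "((A::real^'n^'m) *v axis j 1) $ i = A $ i $ j"
  by (simp add: matrix_vector_mult_basis column_def)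

lemma det_eq_0_iff_kernel:
  fixes A :: "'a::field^'n^'n"
  shows "det A = 0 \<longleftrightarrow> (\<exists>v. v \<noteq> 0 \<and> A *v v = 0)"
proof -
  have "det A \<noteq> 0 \<longleftrightarrow> inj ((*v) A)"
    using det_nz_iff_inj_gen[of "(*v) A"] by simp
  also have "\<dots> \<longleftrightarrow> (\<forall>v. A *v v = 0 \<longrightarrow> v = 0)"
    by (metis (no_types, lifting) injI inj_eq matrix_vector_mult_0_right
        matrix_vector_mult_diff_distrib right_minus_eq)
  finally show ?thesis by blast
qed

section \<open>Spectral radius of nonnegative matrices with constant row sums\<close>

lemma poly_det: "poly (det (Q :: complex poly^'n^'n)) z = det (\<chi> i j. poly (Q $ i $ j) z)"
  unfolding det_def by (simp add: poly_sum poly_prod)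

lemma finite_eigenvalues:
  fixes A :: "complex^'n::finite^'n"
  assumes "det (mat z\<^sub>0 - A) \<noteq> 0"
  shows "finite {z. det (mat z - A) = 0}"
proof -
  define Q :: "complex poly^'n^'n" where "Q = (\<chi> i j. (if i = j then [:0, 1:] else 0) - [:A $ i $ j:])"
  have poly_det_Q: "poly (det Q) z = det (mat z - A)" for z
  proof -
    have "(\<chi> i j. poly (Q $ i $ j) z) = mat z - A"
      by (simp add: Q_def vec_eq_iff mat_def)
    then show ?thesis
      by (simp add: poly_det)
  qed
  then have "det Q \<noteq> 0"
    using assms by (metis poly_0)
  then show ?thesis
    using poly_roots_finite[of "det Q"] by (simp add: poly_det_Q)
qed

definition of_real_matrix :: "real^'n^'m \<Rightarrow> complex^'n^'m" where
  "of_real_matrix B = (\<chi> i j. complex_of_real (B $ i $ j))"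

lemma eigenvalue_norm_le_row_sum:
  fixes B :: "real^'n::finite^'n"
  assumes nonneg: "\<And>i j. 0 \<le> B $ i $ j" and row_sum: "\<And>i. (\<Sum>j\<in>UNIV. B $ i $ j) = c"
    and eigen: "det (mat z - of_real_matrix B) = 0"
  shows "cmod z \<le> c"
proof -
  obtain v where "v \<noteq> 0" and v: "(mat z - of_real_matrix B) *v v = 0"
    using eigen det_eq_0_iff_kernel by blast
  have "Max (range (\<lambda>j. cmod (v $ j))) \<in> range (\<lambda>j. cmod (v $ j))"
    by (intro Max_in) auto
  then obtain i where "cmod (v $ i) = Max (range (\<lambda>j. cmod (v $ j)))"
    by (metis rangeE)
  then have max: "\<And>j. cmod (v $ j) \<le> cmod (v $ i)"
    by simp
  obtain k where "v $ k \<noteq> 0"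
    using \<open>v \<noteq> 0\<close> by (auto simp: vec_eq_iff)
  then have "cmod (v $ i) > 0"
    using max[of k] by (meson zero_less_norm_iff order_less_le_trans)
  have "z * v $ i = (\<Sum>j\<in>UNIV. of_real (B $ i $ j) * v $ j)"
    using arg_cong[OF v, of "\<lambda>x. x $ i"]
    by (simp add: matrix_vector_mult_diff_rdistrib mat_mult_vector)
      (simp add: matrix_vector_mult_def of_real_matrix_def)
  then have "cmod z * cmod (v $ i) \<le> (\<Sum>j\<in>UNIV. B $ i $ j * cmod (v $ j))"
    by (metis (no_types, lifting) norm_mult norm_sum sum.cong norm_of_real abs_of_nonneg nonneg)
  also have "\<dots> \<le> (\<Sum>j\<in>UNIV. B $ i $ j * cmod (v $ i))"
    by (intro sum_mono mult_left_mono max nonneg)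
  also have "\<dots> = c * cmod (v $ i)"
    by (simp add: row_sum sum_distrib_right[symmetric])
  finally show ?thesis
    using \<open>cmod (v $ i) > 0\<close> by simp
qed

text \<open>\<open>c\<close> is an eigenvalue (eigenvector \<open>1\<close>) bounding all others in modulus.\<close>

lemma spectral_radius_eq_row_sum:
  fixes B :: "real^'n::finite^'n"
  assumes nonneg: "\<And>i j. 0 \<le> B $ i $ j" and row_sum: "\<And>i. (\<Sum>j\<in>UNIV. B $ i $ j) = c"
  shows "spectral_radius B = c"
proof -
  let ?eigs = "{z. det (mat z - of_real_matrix B) = 0}"
  have "c \<ge> 0"
    using row_sum[of undefined] sum_nonneg[of UNIV "\<lambda>j. B $ undefined $ j"] nonneg by simp
  have "(mat (of_real c) - of_real_matrix B) *v 1 = 0"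
    using row_sum
    by (simp add: vec_eq_iff matrix_vector_mult_diff_rdistrib mat_mult_vector)
      (simp add: matrix_vector_mult_def of_real_matrix_def flip: of_real_sum)
  moreover have "(1::complex^'n) \<noteq> 0"
    by (simp add: vec_eq_iff)
  ultimately have c_eig: "of_real c \<in> ?eigs"
    using det_eq_0_iff_kernel[of "mat (of_real c) - of_real_matrix B"] by blast
  have "det (mat (of_real (c + 1)) - of_real_matrix B) \<noteq> 0"
    using eigenvalue_norm_le_row_sum[OF nonneg row_sum, of "of_real (c + 1)"] \<open>c \<ge> 0\<close> by auto
  then have "finite ?eigs"
    by (rule finite_eigenvalues)
  have "spectral_radius B = Max (cmod ` ?eigs)"
    unfolding spectral_radius_def of_real_matrix_def by (simp only: setcompr_eq_image)
  also have "\<dots> = c"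
  proof (rule Max_eqI)
    show "y \<le> c" if "y \<in> cmod ` ?eigs" for y
      using that eigenvalue_norm_le_row_sum[OF nonneg row_sum] by auto
    show "c \<in> cmod ` ?eigs"
      using c_eig \<open>c \<ge> 0\<close> by (intro image_eqI[of _ _ "of_real c"]) auto
  qed (use \<open>finite ?eigs\<close> in simp)
  finally show ?thesis .
qed

section \<open>Asymptotics\<close>

lemma div_add_one_le_ln_add_one:
  fixes u :: real
  assumes "-1 < u"
  shows "u / (1 + u) \<le> ln (1 + u)"
proof -
  have "ln (1 + - u / (1 + u)) \<le> - u / (1 + u)"
    using assms by (intro ln_add_one_self_le_self2) (simp add: field_simps)
  moreover have "1 + - u / (1 + u) = inverse (1 + u)"
    using assms by (simp add: field_simps)
  ultimately show ?thesis
    using assms by (simp add: ln_inverse)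
qed

lemma tendsto_div_at_top_0:
  fixes f :: "real \<Rightarrow> real"
  assumes "(f \<longlongrightarrow> a) at_top"
  shows "((\<lambda>x. f x / x) \<longlongrightarrow> 0) at_top"
  using tendsto_mult[OF assms tendsto_inverse_0_at_top[OF filterlim_ident]]
  by (simp add: divide_inverse)

lemma tendsto_mult_ln_add_one_div:
  fixes f :: "real \<Rightarrow> real"
  assumes f: "(f \<longlongrightarrow> a) at_top"
  shows "((\<lambda>x. x * ln (1 + f x / x)) \<longlongrightarrow> a) at_top"
proof -
  define u where "u x = f x / x" for x
  have u: "(u \<longlongrightarrow> 0) at_top"
    unfolding u_def using f by (rule tendsto_div_at_top_0)
  have ev: "\<forall>\<^sub>F x in at_top. -1 < u x \<and> 0 < x"
    using order_tendstoD(1)[OF u, of "-1", simplified] eventually_gt_at_top[of 0]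
    by eventually_elim simp
  have "((\<lambda>x. f x / (1 + u x)) \<longlongrightarrow> a / (1 + 0)) at_top"
    by (intro tendsto_intros f u) simp
  then have lower: "((\<lambda>x. f x / (1 + u x)) \<longlongrightarrow> a) at_top"
    by simp
  show ?thesis
  proof (rule tendsto_sandwich[OF _ _ lower f])
    show "\<forall>\<^sub>F x in at_top. f x / (1 + u x) \<le> x * ln (1 + f x / x)"
      using ev
    proof eventually_elim
      case (elim x)
      then have "x * (u x / (1 + u x)) \<le> x * ln (1 + u x)"
        by (intro mult_left_mono div_add_one_le_ln_add_one) auto
      with elim show ?case by (simp add: u_def)
    qed
    show "\<forall>\<^sub>F x in at_top. x * ln (1 + f x / x) \<le> f x"
      using ev
    proof eventually_elim
      case (elim x)
      then have "x * ln (1 + u x) \<le> x * u x"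
        by (intro mult_left_mono ln_add_one_self_le_self2) auto
      with elim show ?case by (simp add: u_def)
    qed
  qed
qed

lemma lw_theta_div_tendsto:
  assumes "n \<ge> 1"
  shows "((\<lambda>\<alpha>. lw_theta n \<alpha> / \<alpha>) \<longlongrightarrow> 2 / real n) at_top"
proof -
  define p where "p = 2 / real n"
  have "p > 0" using assms by (simp add: p_def)
  have "((\<lambda>\<alpha>. (p + ln (1 + exp 1 * \<alpha> powr (-p)) * inverse (ln \<alpha>)) * (1 - inverse \<alpha>))
       \<longlongrightarrow> (p + ln (1 + exp 1 * 0) * 0) * (1 - 0)) at_top"
    using \<open>p > 0\<close>
    by (intro tendsto_intros tendsto_neg_powr tendsto_inverse_0_at_top filterlim_ident ln_at_top) auto
  moreover have "\<forall>\<^sub>F \<alpha> in at_top. (p + ln (1 + exp 1 * \<alpha> powr (-p)) * inverse (ln \<alpha>)) * (1 - inverse \<alpha>)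
      = lw_theta n \<alpha> / \<alpha>"
    using eventually_gt_at_top[of 1]
  proof eventually_elim
    case (elim \<alpha>)
    have "exp 1 + \<alpha> powr p = \<alpha> powr p * (1 + exp 1 * \<alpha> powr (-p))"
      using elim by (simp add: algebra_simps flip: powr_add)
    moreover have "1 + exp 1 * \<alpha> powr (-p) > 0"
      by (intro add_pos_nonneg) auto
    ultimately have "ln (exp 1 + \<alpha> powr p) = p * ln \<alpha> + ln (1 + exp 1 * \<alpha> powr (-p))"
      using elim by (simp add: ln_mult ln_powr)
    then show ?case
      using elim by (simp add: lw_theta_def p_def field_simps)
  qed
  ultimately show ?thesis
    by (simp add: p_def Lim_transform_eventually)
qed

section \<open>Connected regular weighted adjacency matrices\<close>

locale connected_regular =
  fixes B :: "real^'n::finite^'n" and c :: real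
  assumes symmetric: "\<And>i j. B $ i $ j = B $ j $ i"
    and nonneg: "\<And>i j. 0 \<le> B $ i $ j"
    and row_sum: "\<And>i. (\<Sum>j\<in>UNIV. B $ i $ j) = c"
    and connected: "\<And>i j. (\<lambda>a b. 0 < B $ a $ b)\<^sup>*\<^sup>* i j"
begin

definition L :: "real^'n^'n" where
  "L = mat c - B"

definition N :: real where
  "N = real CARD('n)"

definition P :: "real^'n^'n" where
  "P = (\<chi> i j. 1 / N)"

definition total :: "real^'n \<Rightarrow> real" where
  "total x = (\<Sum>i\<in>UNIV. x $ i)"

lemma N_pos: "N > 0"
  by (simp add: N_def)

lemma c_nonneg: "c \<ge> 0"
  using row_sum[of undefined] sum_nonneg[of UNIV "\<lambda>j. B $ undefined $ j"] nonneg by simp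

lemma laplacian_eq_L: "laplacian B = L"
  by (simp add: vec_eq_iff laplacian_def L_def mat_def row_sum)

lemma spectral_radius_eq_c: "spectral_radius B = c"
  using spectral_radius_eq_row_sum nonneg row_sum by blast

lemma L_mult_nth: "(L *v x) $ i = (\<Sum>j\<in>UNIV. B $ i $ j * (x $ i - x $ j))"
proof -
  have "(L *v x) $ i = c * x $ i - (\<Sum>j\<in>UNIV. B $ i $ j * x $ j)"
    by (simp add: L_def matrix_vector_mult_diff_rdistrib mat_mult_vector)
      (simp add: matrix_vector_mult_def)
  also have "c * x $ i = (\<Sum>j\<in>UNIV. B $ i $ j * x $ i)"
    by (simp add: row_sum sum_distrib_right[symmetric])
  finally show ?thesis
    by (simp add: right_diff_distrib sum_subtractf)
qed

lemma P_mult: "P *v x = (\<chi> i. total x / N)"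
  by (simp add: P_def total_def matrix_vector_mult_def sum_divide_distrib vec_eq_iff)

lemma total_L_mult: "total (L *v x) = 0"
proof -
  have "total (L *v x) = (\<Sum>i\<in>UNIV. \<Sum>j\<in>UNIV. B $ i $ j * (x $ i - x $ j))"
    by (simp add: total_def L_mult_nth)
  also have "\<dots> = (\<Sum>j\<in>UNIV. \<Sum>i\<in>UNIV. B $ j $ i * (x $ i - x $ j))"
    by (subst sum.swap) (simp add: symmetric)
  also have "\<dots> = - total (L *v x)"
    by (simp add: total_def L_mult_nth sum_negf[symmetric] algebra_simps)
  finally show ?thesis
    by simp
qed

lemma quadratic_form_L: "x \<bullet> (L *v x) = (\<Sum>i\<in>UNIV. \<Sum>j\<in>UNIV. B $ i $ j * (x $ i - x $ j)^2) / 2"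
proof -
  have form: "x \<bullet> (L *v x) = (\<Sum>i\<in>UNIV. \<Sum>j\<in>UNIV. B $ i $ j * x $ i * (x $ i - x $ j))"
    by (simp add: inner_vec_def L_mult_nth sum_distrib_left algebra_simps)
  also have "\<dots> = (\<Sum>j\<in>UNIV. \<Sum>i\<in>UNIV. B $ i $ j * x $ i * (x $ i - x $ j))"
    by (rule sum.swap)
  also have "\<dots> = (\<Sum>i\<in>UNIV. \<Sum>j\<in>UNIV. B $ i $ j * x $ j * (x $ j - x $ i))"
    by (simp add: symmetric)
  finally have "2 * (x \<bullet> (L *v x)) =
      (\<Sum>i\<in>UNIV. \<Sum>j\<in>UNIV. B $ i $ j * x $ i * (x $ i - x $ j) + B $ i $ j * x $ j * (x $ j - x $ i))"
    using form by (simp add: sum.distrib)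
  also have "\<dots> = (\<Sum>i\<in>UNIV. \<Sum>j\<in>UNIV. B $ i $ j * (x $ i - x $ j)^2)"
    by (intro sum.cong refl) (simp add: power2_eq_square algebra_simps)
  finally show ?thesis
    by simp
qed

lemma quadratic_form_L_nonneg: "x \<bullet> (L *v x) \<ge> 0"
  unfolding quadratic_form_L by (intro divide_nonneg_pos sum_nonneg mult_nonneg_nonneg nonneg) auto

lemma quadratic_form_L_eq_0_imp_const:
  assumes "x \<bullet> (L *v x) = 0"
  shows "x $ i = x $ j"
proof -
  have "\<forall>a\<in>UNIV. \<forall>b\<in>UNIV. B $ a $ b * (x $ a - x $ b)^2 = 0"
    using assms unfolding quadratic_form_L
    by (simp add: sum_nonneg_eq_0_iff sum_nonneg nonneg)
  then have "\<forall>a b. B $ a $ b = 0 \<or> x $ a = x $ b"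
    by simp
  then have edge: "x $ a = x $ b" if "0 < B $ a $ b" for a b
    using that by (metis less_irrefl)
  show ?thesis
    using connected[of i j] by (induction rule: rtranclp_induct) (auto dest: edge)
qed

lemma eq_0_if_quadratic_form_L_eq_0:
  assumes "x \<bullet> (L *v x) = 0" and "total x = 0"
  shows "x = 0"
proof -
  have "x $ i = 0" for i
  proof -
    have "x $ j = x $ i" for j
      using quadratic_form_L_eq_0_imp_const[OF assms(1)] .
    then have "total x = (\<Sum>j::'n\<in>UNIV. x $ i)"
      unfolding total_def by (intro sum.cong) auto
    then show ?thesis
      using assms(2) by simp
  qed
  then show ?thesis
    by (simp add: vec_eq_iff)
qed

lemma P_L_mult: "P *v (L *v x) = 0"
  by (simp add: P_mult total_L_mult vec_eq_iff)

lemma L_P_mult: "L *v (P *v x) = 0"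
  by (simp add: P_mult vec_eq_iff L_mult_nth)

lemma total_P_mult: "total (P *v x) = total x"
  using N_pos by (simp add: P_mult total_def N_def)

lemma P_P_mult: "P *v (P *v x) = P *v x"
  by (simp add: P_mult total_P_mult[unfolded P_mult])

text \<open>\<open>L + P\<close> is invertible: it acts as \<open>L\<close> on the vectors with zero sum and as the
  identity on the constants. Its inverse minus \<open>P\<close> is the Moore--Penrose inverse of \<open>L\<close>, and its
  regularisations \<open>M \<epsilon>\<close> give the resolvent of \<open>L\<close>.\<close>

definition M :: "real \<Rightarrow> real^'n^'n" where
  "M \<epsilon> = L + P + mat \<epsilon>"

definition M_inv :: "real \<Rightarrow> real^'n^'n" where
  "M_inv \<epsilon> = matrix_inv (M \<epsilon>)"

lemma M_mult: "M \<epsilon> *v x = L *v x + P *v x + \<epsilon> *\<^sub>R x"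
  by (simp add: M_def matrix_vector_mult_add_rdistrib mat_mult_vector scalar_mult_eq_scaleR)

lemma M_kernel:
  assumes "\<epsilon> \<ge> 0" and "M \<epsilon> *v x = 0"
  shows "x = 0"
proof -
  have "total (M \<epsilon> *v x) = total (L *v x) + total (P *v x) + \<epsilon> * total x"
    by (simp add: M_mult total_def sum.distrib sum_distrib_left)
  also have "\<dots> = (1 + \<epsilon>) * total x"
    by (simp add: total_L_mult total_P_mult algebra_simps)
  finally have "(1 + \<epsilon>) * total x = 0"
    using assms(2) by (simp add: total_def)
  then have "total x = 0"
    using assms(1) by simp
  then have "P *v x = 0"
    by (simp add: P_mult vec_eq_iff)
  then have "L *v x + \<epsilon> *\<^sub>R x = 0"
    using assms(2) by (simp add: M_mult)
  then have "x \<bullet> (L *v x) + \<epsilon> * (x \<bullet> x) = 0"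
    by (metis inner_add_right inner_scaleR_right inner_zero_right)
  moreover have "\<epsilon> * (x \<bullet> x) \<ge> 0"
    using assms(1) by simp
  ultimately have "x \<bullet> (L *v x) = 0"
    using quadratic_form_L_nonneg[of x] by linarith
  then show "x = 0"
    using \<open>total x = 0\<close> by (rule eq_0_if_quadratic_form_L_eq_0)
qed

lemma invertible_M: "\<epsilon> \<ge> 0 \<Longrightarrow> invertible (M \<epsilon>)"
  using M_kernel det_eq_0_iff_kernel invertible_det_nz by blast

lemma M_inv_M_mult: "\<epsilon> \<ge> 0 \<Longrightarrow> M_inv \<epsilon> *v (M \<epsilon> *v v) = v"
  using matrix_inv_mult_eq_mat_1[OF invertible_M]
  by (simp add: M_inv_def matrix_vector_mul_assoc)

lemma M_M_inv_mult: "\<epsilon> \<ge> 0 \<Longrightarrow> M \<epsilon> *v (M_inv \<epsilon> *v v) = v"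
  using matrix_inv_mult_eq_mat_1[OF invertible_M]
  by (simp add: M_inv_def matrix_vector_mul_assoc)

lemma M_inv_P_mult:
  assumes "\<epsilon> \<ge> 0"
  shows "M_inv \<epsilon> *v (P *v x) = (1 / (1 + \<epsilon>)) *\<^sub>R (P *v x)"
proof -
  have "M \<epsilon> *v (P *v x) = (1 + \<epsilon>) *\<^sub>R (P *v x)"
    by (simp add: M_mult L_P_mult P_P_mult algebra_simps)
  then have "P *v x = (1 + \<epsilon>) *\<^sub>R (M_inv \<epsilon> *v (P *v x))"
    using M_inv_M_mult[OF assms, of "P *v x"] by (simp add: matrix_vector_mult_scaleR)
  then have "(1 / (1 + \<epsilon>)) *\<^sub>R (P *v x) = (1 / (1 + \<epsilon>)) *\<^sub>R ((1 + \<epsilon>) *\<^sub>R (M_inv \<epsilon> *v (P *v x)))"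
    by simp
  then show ?thesis
    using assms by simp
qed

lemma P_M_inv_mult:
  assumes "\<epsilon> \<ge> 0"
  shows "P *v (M_inv \<epsilon> *v x) = (1 / (1 + \<epsilon>)) *\<^sub>R (P *v x)"
proof -
  have "P *v x = P *v (M \<epsilon> *v (M_inv \<epsilon> *v x))"
    using M_M_inv_mult[OF assms] by simp
  also have "\<dots> = (1 + \<epsilon>) *\<^sub>R (P *v (M_inv \<epsilon> *v x))"
    by (simp add: M_mult P_L_mult P_P_mult algebra_simps matrix_vector_right_distrib
        matrix_vector_mult_scaleR)
  finally show ?thesis
    using assms by simp
qed

definition resolvent :: "real \<Rightarrow> real^'n^'n" where
  "resolvent \<epsilon> = (1 / \<epsilon>) *\<^sub>R P + M_inv \<epsilon> - (1 / (1 + \<epsilon>)) *\<^sub>R P"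

lemma L_plus_mat_resolvent:
  assumes "\<epsilon> > 0"
  shows "(L + mat \<epsilon>) ** resolvent \<epsilon> = mat 1"
proof -
  have "(L + mat \<epsilon>) *v (resolvent \<epsilon> *v v) = v" for v
  proof -
    define p y where "p = P *v v" and "y = M_inv \<epsilon> *v v"
    have "v = M \<epsilon> *v y"
      using M_M_inv_mult assms by (simp add: y_def)
    also have "\<dots> = L *v y + (1 / (1 + \<epsilon>)) *\<^sub>R p + \<epsilon> *\<^sub>R y"
      using assms by (simp add: M_mult y_def p_def P_M_inv_mult)
    finally have Ly: "L *v y = v - (1 / (1 + \<epsilon>)) *\<^sub>R p - \<epsilon> *\<^sub>R y"
      by (simp add: algebra_simps)
    have resolvent_v: "resolvent \<epsilon> *v v = (1 / \<epsilon>) *\<^sub>R p + y - (1 / (1 + \<epsilon>)) *\<^sub>R p"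
      by (simp add: resolvent_def p_def y_def matrix_vector_mult_add_rdistrib
          matrix_vector_mult_diff_rdistrib scaleR_matrix_vector_assoc)
    have "L *v p = 0"
      by (simp add: p_def L_P_mult)
    have "(L + mat \<epsilon>) *v (resolvent \<epsilon> *v v) = L *v (resolvent \<epsilon> *v v) + \<epsilon> *\<^sub>R (resolvent \<epsilon> *v v)"
      by (simp add: matrix_vector_mult_add_rdistrib mat_mult_vector scalar_mult_eq_scaleR)
    also have "\<dots> = v + (1 - 1 / (1 + \<epsilon>) - \<epsilon> / (1 + \<epsilon>)) *\<^sub>R p"
      using assms \<open>L *v p = 0\<close>
      by (simp add: resolvent_v matrix_vector_right_distrib matrix_vector_mult_diff_distrib
          matrix_vector_mult_scaleR Ly algebra_simps)
    also have "1 - 1 / (1 + \<epsilon>) - \<epsilon> / (1 + \<epsilon>) = 0"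
      using assms by (simp add: field_simps)
    finally show ?thesis
      by simp
  qed
  then show ?thesis
    by (simp add: matrix_eq matrix_vector_mul_assoc)
qed

definition Lplus :: "real^'n^'n" where
  "Lplus = M_inv 0 - P"

lemma L_Lplus_mult: "L *v (Lplus *v v) = v - P *v v"
proof -
  have "v = M 0 *v (M_inv 0 *v v)"
    using M_M_inv_mult by simp
  also have "\<dots> = L *v (M_inv 0 *v v) + P *v v"
    using P_M_inv_mult[of 0] by (simp add: M_mult)
  finally have "L *v (M_inv 0 *v v) = v - P *v v"
    by (simp add: algebra_simps)
  then show ?thesis
    by (simp add: Lplus_def matrix_vector_mult_diff_rdistrib matrix_vector_mult_diff_distrib L_P_mult)
qed

lemma Lplus_L_mult: "Lplus *v (L *v v) = v - P *v v"
proof -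
  have "L *v v = M 0 *v v - P *v v"
    by (simp add: M_mult)
  then have "M_inv 0 *v (L *v v) = v - P *v v"
    using M_inv_M_mult[of 0] M_inv_P_mult[of 0] by (simp add: matrix_vector_mult_diff_distrib)
  then show ?thesis
    by (simp add: Lplus_def matrix_vector_mult_diff_rdistrib P_L_mult)
qed

lemma Lplus_P_mult: "Lplus *v (P *v v) = 0"
  using M_inv_P_mult[of 0] by (simp add: Lplus_def matrix_vector_mult_diff_rdistrib P_P_mult)

lemma mp_inverse_L: "mp_inverse L = Lplus"
proof (rule mp_inverse_eqI)
  have "transpose (mat 1 - P) = mat 1 - P"
    by (simp add: vec_eq_iff transpose_def P_def mat_def)
  moreover have "L ** Lplus = mat 1 - P" "Lplus ** L = mat 1 - P"
    by (simp_all add: matrix_eq flip: matrix_vector_mul_assoc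
        add: L_Lplus_mult Lplus_L_mult matrix_vector_mult_diff_rdistrib)
  ultimately show "transpose (L ** Lplus) = L ** Lplus" "transpose (Lplus ** L) = Lplus ** L"
    by simp_all
  show "L ** Lplus ** L = L" "Lplus ** L ** Lplus = Lplus"
    by (simp_all add: matrix_eq flip: matrix_vector_mul_assoc
        add: L_Lplus_mult Lplus_L_mult matrix_vector_mult_diff_distrib L_P_mult Lplus_P_mult)
qed

lemma Lplus_symmetric: "Lplus $ i $ j = Lplus $ j $ i"
proof -
  have "M 0 $ a $ b = M 0 $ b $ a" for a b
    by (simp add: M_def L_def P_def mat_def symmetric[of a b])
  then have M_0_symmetric: "transpose (M 0) = M 0"
    by (simp add: vec_eq_iff transpose_def)
  have "transpose (M_inv 0 ** M 0) = mat 1"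
    using matrix_inv_mult_eq_mat_1(2)[OF invertible_M[of 0]] by (simp add: M_inv_def)
  then have "M 0 ** transpose (M_inv 0) = mat 1"
    by (simp only: matrix_transpose_mul M_0_symmetric)
  then have "matrix_inv (M 0) = transpose (M_inv 0)"
    by (rule matrix_inv_eqI)
  then have "transpose (M_inv 0) = M_inv 0"
    by (simp add: M_inv_def)
  then have "transpose (M_inv 0) $ j $ i = M_inv 0 $ j $ i"
    by simp
  then show ?thesis
    by (simp add: transpose_def Lplus_def P_def)
qed

lemma resistance_Lplus:
  "(axis i 1 - axis j 1) \<bullet> (Lplus *v (axis i 1 - axis j 1)) = Lplus $ i $ i + Lplus $ j $ j - 2 * Lplus $ i $ j"
proof -
  have "(axis i 1 - axis j 1) \<bullet> (Lplus *v (axis i 1 - axis j 1)) =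
      (Lplus *v axis i 1) $ i - (Lplus *v axis j 1) $ i - ((Lplus *v axis i 1) $ j - (Lplus *v axis j 1) $ j)"
    by (simp add: inner_diff_left inner_axis' matrix_vector_mult_diff_distrib)
  then show ?thesis
    using Lplus_symmetric[of i j] by (simp add: matrix_vector_mult_axis_nth)
qed

lemma M_inv_mult_dist_le:
  obtains m where "m > 0"
    "\<And>\<epsilon> v. 0 \<le> \<epsilon> \<Longrightarrow> \<epsilon> \<le> m / 2 \<Longrightarrow> norm (M_inv \<epsilon> *v v - M_inv 0 *v v) \<le> 2 * \<epsilon> * norm v / m^2"
proof -
  obtain m where "m > 0" and m: "\<And>x. m * norm x \<le> norm (M 0 *v x)"
    using linear_inj_bounded_below_pos[OF matrix_vector_mul_linear
        inj_matrix_vector_mult[OF invertible_M[of 0]]] by blast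
  show ?thesis
  proof (rule that[OF \<open>m > 0\<close>])
    fix \<epsilon> v assume \<epsilon>: "0 \<le> \<epsilon>" "\<epsilon> \<le> m / 2"
    define y where "y = M_inv \<epsilon> *v v"
    have "M \<epsilon> *v y = v"
      using M_M_inv_mult[OF \<epsilon>(1)] by (simp add: y_def)
    then have My: "M 0 *v y = v - \<epsilon> *\<^sub>R y"
      by (simp add: M_mult algebra_simps)
    \<comment> \<open>\<open>M 0\<close> is bounded below by \<open>m\<close>, so its perturbations \<open>M \<epsilon>\<close> are bounded below by \<open>m/2\<close>\<close>
    have "m * norm y \<le> norm v + \<epsilon> * norm y"
      using m[of y] My norm_triangle_ineq4[of v "\<epsilon> *\<^sub>R y"] \<epsilon>(1) by simp
    moreover have "\<epsilon> * norm y \<le> m / 2 * norm y"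
      using \<epsilon> by (intro mult_right_mono) auto
    ultimately have norm_y: "norm y \<le> 2 * norm v / m"
      using \<open>m > 0\<close> by (simp add: field_simps)
    have "M 0 *v (y - M_inv 0 *v v) = - \<epsilon> *\<^sub>R y"
      using My M_M_inv_mult[of 0 v] by (simp add: matrix_vector_mult_diff_distrib)
    then have "m * norm (y - M_inv 0 *v v) \<le> \<epsilon> * norm y"
      using m[of "y - M_inv 0 *v v"] \<epsilon>(1) by simp
    also have "\<dots> \<le> \<epsilon> * (2 * norm v / m)"
      using norm_y \<epsilon>(1) by (intro mult_left_mono) auto
    finally show "norm (M_inv \<epsilon> *v v - M_inv 0 *v v) \<le> 2 * \<epsilon> * norm v / m^2"
      using \<open>m > 0\<close> by (simp add: y_def field_simps power2_eq_square)
  qed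
qed

lemma M_inv_nth_tendsto: "((\<lambda>\<alpha>. M_inv (1 / \<alpha>) $ i $ j) \<longlongrightarrow> M_inv 0 $ i $ j) at_top"
proof -
  obtain m where "m > 0" and m:
    "\<And>\<epsilon> v. 0 \<le> \<epsilon> \<Longrightarrow> \<epsilon> \<le> m / 2 \<Longrightarrow> norm (M_inv \<epsilon> *v v - M_inv 0 *v v) \<le> 2 * \<epsilon> * norm v / m^2"
    using M_inv_mult_dist_le by blast
  have "\<forall>\<^sub>F \<alpha> in at_top. norm (M_inv (1 / \<alpha>) $ i $ j - M_inv 0 $ i $ j) \<le> 2 / m^2 * inverse \<alpha>"
    using eventually_ge_at_top[of "2 / m"]
  proof eventually_elim
    case (elim \<alpha>)
    moreover have "2 / m > 0"
      using \<open>m > 0\<close> by simp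
    ultimately have "\<alpha> > 0"
      by linarith
    then have "1 / \<alpha> \<le> m / 2"
      using elim \<open>m > 0\<close> by (simp add: field_simps)
    have "norm (M_inv (1 / \<alpha>) $ i $ j - M_inv 0 $ i $ j)
        = \<bar>(M_inv (1 / \<alpha>) *v axis j 1 - M_inv 0 *v axis j 1) $ i\<bar>"
      by (simp add: matrix_vector_mult_axis_nth)
    also have "\<dots> \<le> norm (M_inv (1 / \<alpha>) *v axis j 1 - M_inv 0 *v axis j 1)"
      by (rule component_le_norm_cart)
    also have "\<dots> \<le> 2 * (1 / \<alpha>) * norm (axis j (1::real)) / m^2"
      by (rule m) (use \<open>\<alpha> > 0\<close> \<open>1 / \<alpha> \<le> m / 2\<close> in auto)
    also have "\<dots> = 2 / m^2 * inverse \<alpha>"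
      by (simp add: divide_inverse)
    finally show ?case .
  qed
  moreover have "((\<lambda>\<alpha>. 2 / m^2 * inverse \<alpha>) \<longlongrightarrow> 0) at_top"
    by (intro tendsto_mult_right_zero tendsto_inverse_0_at_top filterlim_ident)
  ultimately have "((\<lambda>\<alpha>. M_inv (1 / \<alpha>) $ i $ j - M_inv 0 $ i $ j) \<longlongrightarrow> 0) at_top"
    by (rule Lim_null_comparison)
  then show ?thesis
    by (simp add: LIM_zero_iff)
qed


definition lw_remainder :: "'n \<Rightarrow> 'n \<Rightarrow> real \<Rightarrow> real" where
  "lw_remainder i j \<alpha> = M_inv (1 / \<alpha>) $ i $ j - 1 / ((1 + 1 / \<alpha>) * N)"

lemma lw_remainder_tendsto: "(lw_remainder i j \<longlongrightarrow> Lplus $ i $ j) at_top"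
proof -
  have "((\<lambda>\<alpha>. M_inv (1 / \<alpha>) $ i $ j - 1 / ((1 + inverse \<alpha>) * N)) \<longlongrightarrow> M_inv 0 $ i $ j - 1 / ((1 + 0) * N)) at_top"
    using N_pos by (intro tendsto_intros M_inv_nth_tendsto tendsto_inverse_0_at_top filterlim_ident) auto
  moreover have "lw_remainder i j = (\<lambda>\<alpha>. M_inv (1 / \<alpha>) $ i $ j - 1 / ((1 + inverse \<alpha>) * N))"
    by (simp add: fun_eq_iff lw_remainder_def divide_inverse)
  ultimately show ?thesis
    by (simp add: Lplus_def P_def)
qed

lemma lw_R_nth:
  assumes "\<alpha> > 0"
  shows "lw_R B \<alpha> $ i $ j = (c + 1 / \<alpha>) * (\<alpha> / N + lw_remainder i j \<alpha>)"
proof -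
  define \<epsilon> t where "\<epsilon> = 1 / \<alpha>" and "t = 1 / (c + \<epsilon>)"
  have "\<epsilon> > 0" "c + \<epsilon> > 0"
    using assms c_nonneg by (simp_all add: \<epsilon>_def add_nonneg_pos)
  have "t * (c + \<epsilon>) = 1"
    using \<open>c + \<epsilon> > 0\<close> by (simp add: t_def)
  then have "mat 1 - t *\<^sub>R B = t *\<^sub>R (L + mat \<epsilon>)"
    by (auto simp: vec_eq_iff L_def mat_def algebra_simps)
  moreover have "(t *\<^sub>R (L + mat \<epsilon>)) ** ((1 / t) *\<^sub>R resolvent \<epsilon>) = mat 1"
    using L_plus_mat_resolvent[OF \<open>\<epsilon> > 0\<close>] \<open>c + \<epsilon> > 0\<close>
    by (simp add: matrix_scalar_ac scalar_matrix_assoc t_def)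
  ultimately have "lw_R B \<alpha> = (1 / t) *\<^sub>R resolvent \<epsilon>"
    unfolding lw_R_def spectral_radius_eq_c \<epsilon>_def t_def by (simp add: matrix_inv_eqI)
  then have "lw_R B \<alpha> $ i $ j = (c + \<epsilon>) * ((1 / \<epsilon>) * (1 / N) + M_inv \<epsilon> $ i $ j - (1 / (1 + \<epsilon>)) * (1 / N))"
    by (simp add: resolvent_def P_def t_def)
  then show ?thesis
    using assms by (simp add: \<epsilon>_def lw_remainder_def algebra_simps)
qed

lemma ln_lw_R_nth:
  assumes "\<alpha> > 0" and "1 + N * lw_remainder i j \<alpha> / \<alpha> > 0"
  shows "ln (lw_R B \<alpha> $ i $ j) = ln (c + 1 / \<alpha>) + ln (\<alpha> / N) + ln (1 + N * lw_remainder i j \<alpha> / \<alpha>)"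
proof -
  have "lw_R B \<alpha> $ i $ j = (c + 1 / \<alpha>) * (\<alpha> / N) * (1 + N * lw_remainder i j \<alpha> / \<alpha>)"
    using lw_R_nth[OF assms(1)] assms(1) N_pos by (simp add: field_simps)
  moreover have "c + 1 / \<alpha> > 0" "\<alpha> / N > 0"
    using assms(1) c_nonneg N_pos by (simp_all add: add_nonneg_pos)
  ultimately show ?thesis
    using assms(2) by (simp only: ln_mult_pos mult_pos_pos)
qed

lemma has_long_walk_distance_Lplus:
  "has_long_walk_distance B i j (Lplus $ i $ i + Lplus $ j $ j - 2 * Lplus $ i $ j)"
proof -
  define g where "g x y \<alpha> = ln (1 + N * lw_remainder x y \<alpha> / \<alpha>)" for x y \<alpha>
  have pos: "\<forall>\<^sub>F \<alpha> in at_top. 1 + N * lw_remainder x y \<alpha> / \<alpha> > 0" for x y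
    using order_tendstoD(1)[OF tendsto_div_at_top_0[OF tendsto_mult_left[OF lw_remainder_tendsto]],
        of "-1" N x y]
    by (simp add: eventually_mono)
  \<comment> \<open>the terms \<open>ln (c + 1/\<alpha>) + ln (\<alpha>/N)\<close> cancel in the long walk expression\<close>
  have ev: "\<forall>\<^sub>F \<alpha> in at_top. (lw_theta CARD('n) \<alpha> / \<alpha>) *
        ((\<alpha> * g i i \<alpha> + \<alpha> * g j j \<alpha>) / 2 - \<alpha> * g i j \<alpha>) =
      lw_theta CARD('n) \<alpha> *
        ((ln (lw_R B \<alpha> $ i $ i) + ln (lw_R B \<alpha> $ j $ j)) / 2 - ln (lw_R B \<alpha> $ i $ j))"
    using eventually_gt_at_top[of 0] pos[of i i] pos[of j j] pos[of i j]
    by eventually_elim (simp add: ln_lw_R_nth g_def field_simps)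
  have lim: "((\<lambda>\<alpha>. (lw_theta CARD('n) \<alpha> / \<alpha>) *
        ((\<alpha> * g i i \<alpha> + \<alpha> * g j j \<alpha>) / 2 - \<alpha> * g i j \<alpha>)) \<longlongrightarrow>
      (2 / N) * ((N * Lplus $ i $ i + N * Lplus $ j $ j) / 2 - N * Lplus $ i $ j)) at_top"
  proof -
    have theta: "((\<lambda>\<alpha>. lw_theta CARD('n) \<alpha> / \<alpha>) \<longlongrightarrow> 2 / N) at_top"
      using lw_theta_div_tendsto[of "CARD('n)"] by (simp add: N_def Suc_le_eq)
    have "((\<lambda>\<alpha>. \<alpha> * g x y \<alpha>) \<longlongrightarrow> N * Lplus $ x $ y) at_top" for x y
      unfolding g_def by (intro tendsto_mult_ln_add_one_div tendsto_mult_left lw_remainder_tendsto)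
    then show ?thesis
      by (intro tendsto_mult[OF theta] tendsto_diff tendsto_divide tendsto_add tendsto_const) simp_all
  qed
  have "(2 / N) * ((N * Lplus $ i $ i + N * Lplus $ j $ j) / 2 - N * Lplus $ i $ j) =
      Lplus $ i $ i + Lplus $ j $ j - 2 * Lplus $ i $ j"
    using N_pos by (simp add: field_simps)
  with Lim_transform_eventually[OF lim ev] show ?thesis
    unfolding has_long_walk_distance_def by simp
qed

end

section \<open>Balance-graphs\<close>

lemma wadj_symmetric: "wadj E ends w $ i $ j = wadj E ends w $ j $ i"
  by (simp add: wadj_def insert_commute)

lemma wadj_nonneg:
  assumes "wmultigraph E ends w"
  shows "0 \<le> wadj E ends w $ i $ j"
proof -
  have "\<forall>e\<in>E. 0 < w e"
    using assms by (simp add: wmultigraph_def)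
  then show ?thesis
    unfolding wadj_def vec_lambda_beta by (intro sum_nonneg) (auto intro: less_imp_le)
qed

lemma wadj_pos_if_edge:
  assumes "wmultigraph E ends w" and "e \<in> E" and "ends e = {a, b}"
  shows "0 < wadj E ends w $ a $ b"
proof -
  have "finite E" and pos: "\<forall>e\<in>E. 0 < w e"
    using assms(1) by (simp_all add: wmultigraph_def)
  have "w e \<le> (\<Sum>e\<in>{e\<in>E. ends e = {a, b}}. w e)"
    using assms(2,3) \<open>finite E\<close> pos by (intro member_le_sum) (auto intro: less_imp_le)
  moreover have "0 < w e"
    using pos assms(2) by blast
  ultimately show ?thesis
    unfolding wadj_def by simp
qed

lemma wconnected_wadj_pos:
  assumes "wmultigraph E ends w" and "wconnected E ends"
  shows "(\<lambda>a b. 0 < wadj E ends w $ a $ b)\<^sup>*\<^sup>* i j"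
proof (rule mono_rtranclp[rule_format])
  show "(\<lambda>a b. \<exists>e\<in>E. ends e = {a, b})\<^sup>*\<^sup>* i j"
    using assms(2) by (simp add: wconnected_def)
qed (auto intro: wadj_pos_if_edge[OF assms(1)])

lemma balance_graph_wconnected:
  assumes "balance_graph E ends w E' ends' w'" and "wconnected E ends"
  shows "wconnected E' ends'"
proof -
  have sub: "E \<subseteq> E'" and agree: "\<And>e. e \<in> E \<Longrightarrow> ends' e = ends e"
    using assms(1) unfolding balance_graph_def by auto
  show ?thesis
    unfolding wconnected_def
  proof (intro allI)
    fix i j
    have "(\<lambda>a b. \<exists>e\<in>E. ends e = {a, b})\<^sup>*\<^sup>* i j"
      using assms(2) by (simp add: wconnected_def)
    then show "(\<lambda>a b. \<exists>e\<in>E'. ends' e = {a, b})\<^sup>*\<^sup>* i j"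
      by (rule mono_rtranclp[rule_format, rotated]) (use sub agree in \<open>metis subsetD\<close>)
  qed
qed

text \<open>The added edges are loops, so they only change the diagonal.\<close>

lemma balance_graph_wadj_offdiag:
  assumes "balance_graph E ends w E' ends' w'" and "i \<noteq> j"
  shows "wadj E' ends' w' $ i $ j = wadj E ends w $ i $ j"
proof -
  have sub: "E \<subseteq> E'" and agree: "\<And>e. e \<in> E \<Longrightarrow> ends' e = ends e \<and> w' e = w e"
    and loops: "\<And>e. e \<in> E' - E \<Longrightarrow> \<exists>k. ends' e = {k}"
    using assms(1) unfolding balance_graph_def by auto
  have only_old: "e \<in> E" if e: "e \<in> E'" "ends' e = {i, j}" for e
  proof (rule ccontr)
    assume "e \<notin> E"
    then obtain k where "ends' e = {k}"
      using loops[of e] e(1) by blast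
    then show False
      using e(2) assms(2) by (metis insertCI singletonD)
  qed
  have "e \<in> E \<and> ends e = {i, j} \<longleftrightarrow> e \<in> E' \<and> ends' e = {i, j}" for e
    using sub only_old agree[of e] by blast
  then have "{e\<in>E'. ends' e = {i, j}} = {e\<in>E. ends e = {i, j}}"
    by blast
  then have "wadj E' ends' w' $ i $ j = (\<Sum>e\<in>{e\<in>E. ends e = {i, j}}. w' e)"
    by (simp add: wadj_def)
  also have "\<dots> = (\<Sum>e\<in>{e\<in>E. ends e = {i, j}}. w e)"
    using agree by (intro sum.cong) auto
  also have "\<dots> = wadj E ends w $ i $ j"
    by (simp add: wadj_def)
  finally show ?thesis .
qed

lemma laplacian_eq_if_offdiag_eq:
  fixes X Z :: "real^'n::finite^'n"
  assumes "\<And>i j. i \<noteq> j \<Longrightarrow> X $ i $ j = Z $ i $ j"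
  shows "laplacian X = laplacian Z"
proof -
  have "(\<Sum>k\<in>UNIV. X $ i $ k) - X $ i $ i = (\<Sum>k\<in>UNIV. Z $ i $ k) - Z $ i $ i" for i
  proof -
    have "(\<Sum>k\<in>UNIV - {i}. X $ i $ k) = (\<Sum>k\<in>UNIV - {i}. Z $ i $ k)"
      using assms by (intro sum.cong) auto
    then show ?thesis
      by (simp add: sum_diff1)
  qed
  then have "laplacian X $ i $ j = laplacian Z $ i $ j" for i j
    using assms[of i j] by (cases "i = j") (simp_all add: laplacian_def)
  then show ?thesis
    by (simp add: vec_eq_iff)
qed

lemma balance_graph_connected_regular:
  assumes "balance_graph E ends w E' ends' w'" and "wconnected E ends"
  obtains c where "connected_regular (wadj E' ends' w') c"
proof -
  have G': "wmultigraph E' ends' w'"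
    using assms(1) unfolding balance_graph_def by blast
  obtain c where row_sum: "\<And>i. (\<Sum>j\<in>UNIV. wadj E' ends' w' $ i $ j) = c"
    using assms(1) unfolding balance_graph_def by blast
  have "connected_regular (wadj E' ends' w') c"
  proof
    show "wadj E' ends' w' $ i $ j = wadj E' ends' w' $ j $ i" for i j
      by (rule wadj_symmetric)
    show "0 \<le> wadj E' ends' w' $ i $ j" for i j
      using G' by (rule wadj_nonneg)
    show "(\<Sum>j\<in>UNIV. wadj E' ends' w' $ i $ j) = c" for i
      by (rule row_sum)
    show "(\<lambda>a b. 0 < wadj E' ends' w' $ a $ b)\<^sup>*\<^sup>* i j" for i j
      using G' balance_graph_wconnected[OF assms] by (rule wconnected_wadj_pos)
  qed
  then show ?thesis ..
qed

theorem corollary7: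
  fixes E E' :: "'e set" and ends ends' :: "'e \<Rightarrow> 'n::finite set" and w w' :: "'e \<Rightarrow> real"
  assumes "CARD('n) \<ge> 2"
    and "wmultigraph E ends w"
    and "wconnected E ends"
    and "balance_graph E ends w E' ends' w'"
  shows "\<forall>i j. has_long_walk_distance (wadj E' ends' w') i j
                 (resistance_distance (wadj E ends w) i j)"
proof (intro allI)
  fix i j
  obtain c where "connected_regular (wadj E' ends' w') c"
    using balance_graph_connected_regular[OF assms(4,3)] .
  then interpret connected_regular "wadj E' ends' w'" c .
  have "laplacian (wadj E ends w) = L"
    unfolding laplacian_eq_L[symmetric]
    by (rule laplacian_eq_if_offdiag_eq) (rule balance_graph_wadj_offdiag[OF assms(4), symmetric])
  then have "resistance_distance (wadj E ends w) i j = Lplus $ i $ i + Lplus $ j $ j - 2 * Lplus $ i $ j"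
    unfolding resistance_distance_def by (simp only: mp_inverse_L resistance_Lplus)
  with has_long_walk_distance_Lplus
  show "has_long_walk_distance (wadj E' ends' w') i j (resistance_distance (wadj E ends w) i j)"
    by (simp only:)
qed

end
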